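(* Let $w(q)>0$ be any function with $w(q)\to0$ as $q\to\infty$. For each $q\ge3$ there exists a subset $\mathcal F_q$ of the set of Dirichlet characters modulo $q$, with the property that $\chi\in\mathcal F_q$ if and only if $\overline\chi\in\mathcal F_q$, of cardinality $$\#\mathcal F_q\ge\phi(q)\big(1-O(w(q)^2)\big),$$ such that $\log q_\chi=\log q+O\big(w(q)^{-1}\log\log q\big)$ for each $\chi\in\mathcal F_q$ (with absolute implied constants).
   Context: $q_\chi$ denotes the conductor of the Dirichlet character $\chi$. *)

theory Defs
  imports "HOL-Analysis.Analysis" "HOL-Number_Theory.Number_Theory"
begin

definition dirichlet_char :: "nat \<Rightarrow> (nat \<Rightarrow> complex) \<Rightarrow> bool" where
  "dirichlet_char q c \<longleftrightarrow>
     q > 0 \<and> c 1 = 1 \<and>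
     (\<forall>n. c (n + q) = c n) \<and>
     (\<forall>m n. c (m * n) = c m * c n) \<and>
     (\<forall>n. c n \<noteq> 0 \<longleftrightarrow> coprime n q)"

definition dirichlet_chars :: "nat \<Rightarrow> (nat \<Rightarrow> complex) set" where
  "dirichlet_chars q = {c. dirichlet_char q c}"

definition conductor :: "nat \<Rightarrow> (nat \<Rightarrow> complex) \<Rightarrow> nat" where
  "conductor q c = (LEAST d. d > 0 \<and> d dvd q \<and>
      (\<forall>n. coprime n q \<and> [n = 1] (mod d) \<longrightarrow> c n = 1))"

end

theory Submission
  imports Defs
begin

text \<open>Write \<open>e(\<chi>) = q / q\<^sub>\<chi>\<close>. Since \<open>ln e(\<chi>)\<close> is the sum of \<open>ln p\<close> over the prime powers
  \<open>p\<^sup>i\<close> dividing \<open>e(\<chi>)\<close>, the second moment \<open>\<Sum>\<^sub>\<chi> ln\<^sup>2 e(\<chi>)\<close> expands into a double sum, over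
  pairs of prime powers dividing \<open>q\<close>, of the number of characters for which both divide \<open>e(\<chi>)\<close>.
  A character with \<open>m | e(\<chi>)\<close> is induced from modulus \<open>q / m\<close>, so there are at most
  \<open>\<phi>(q / m) \<le> \<phi>(q) / \<phi>(m)\<close> of them; this count rests on the fact that a character of a subgroup
  \<open>H\<close> of a finite abelian group \<open>G\<close> has exactly \<open>|G| / |H|\<close> extensions to \<open>G\<close>.
  The double sum is then \<open>O(\<phi>(q) ((\<Sum>\<^bsub>p|q\<^esub> ln p / p)\<^sup>2 + \<Sum>\<^bsub>p|q\<^esub> ln\<^sup>2 p / p)) = O(\<phi>(q) (ln ln q)\<^sup>2)\<close>:
  prime factors below \<open>ln q\<close> are controlled by the Chebyshev-type bound \<open>\<Sum>\<^bsub>p\<le>N\<^esub> ln p / p \<le> 2 ln N\<close>,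
  and the larger ones by \<open>\<Sum>\<^bsub>p|q\<^esub> ln p \<le> ln q\<close>. Chebyshev's inequality now shows that at most
  \<open>O(\<phi>(q) w(q)\<^sup>2)\<close> characters have \<open>ln e(\<chi>) > C ln ln q / w(q)\<close>; the others form \<open>F\<^sub>q\<close>, which
  is closed under conjugation because a character and its conjugate have the same conductor.\<close>

section \<open>Counting extensions of characters of finite abelian groups\<close>

text \<open>Characters of a subgroup \<open>H\<close> are extended by \<open>0\<close> outside \<open>H\<close>, so that they are determined
  by their values on \<open>H\<close>.\<close>
definition char_on :: "('a, 'b) monoid_scheme \<Rightarrow> 'a set \<Rightarrow> ('a \<Rightarrow> complex) \<Rightarrow> bool" where
  "char_on G H f \<longleftrightarrow>
     (\<forall>x\<in>H. \<forall>y\<in>H. f (x \<otimes>\<^bsub>G\<^esub> y) = f x * f y) \<and> f \<one>\<^bsub>G\<^esub> = 1 \<and> (\<forall>x. x \<notin> H \<longrightarrow> f x = 0)"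

definition char_extensions ::
    "('a, 'b) monoid_scheme \<Rightarrow> 'a set \<Rightarrow> ('a \<Rightarrow> complex) \<Rightarrow> 'a set \<Rightarrow> ('a \<Rightarrow> complex) set" where
  "char_extensions G H \<psi> K = {f. char_on G K f \<and> (\<forall>x\<in>H. f x = \<psi> x)}"

context comm_group
begin

lemma subgroup_nat_pow_closed:
  assumes "subgroup H G" "x \<in> H" shows "x [^] (n::nat) \<in> H"
proof (induction n)
  case 0 then show ?case using assms subgroup.one_closed by simp
next
  case (Suc n) then show ?case using assms subgroup.m_closed by simp
qed

lemma char_on_trivial: "subgroup H G \<Longrightarrow> char_on G H (\<lambda>x. if x \<in> H then 1 else 0)"
  unfolding char_on_def by (auto intro: subgroup.m_closed subgroup.one_closed)

lemma char_on_eqI: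
  assumes "char_on G H a" "char_on G H b" "\<And>x. x \<in> H \<Longrightarrow> a x = b x"
  shows "a = b"
proof
  fix x show "a x = b x" using assms unfolding char_on_def by (cases "x \<in> H") auto
qed

lemma char_on_nonzero:
  assumes "subgroup H G" "char_on G H f" "x \<in> H" shows "f x \<noteq> 0"
proof
  assume "f x = 0"
  have "inv x \<in> H" using subgroup.m_inv_closed[OF assms(1,3)] .
  hence "f (x \<otimes> inv x) = f x * f (inv x)" using assms(2,3) unfolding char_on_def by simp
  moreover have "x \<otimes> inv x = \<one>" using subgroup.mem_carrier[OF assms(1,3)] by simp
  ultimately show False using assms(2) \<open>f x = 0\<close> unfolding char_on_def by simp
qed

lemma char_on_pow:
  assumes "subgroup H G" "char_on G H f" "x \<in> H" shows "f (x [^] (n::nat)) = f x ^ n"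
proof (induction n)
  case 0 then show ?case using assms(2) by (simp add: char_on_def)
next
  case (Suc n)
  have "x [^] n \<in> H" using subgroup_nat_pow_closed[OF assms(1,3)] .
  then show ?case using Suc assms unfolding char_on_def by simp
qed

end

text \<open>If \<open>m\<close> is the order of \<open>g H\<close> in \<open>G / H\<close>, then \<open>H\<langle>g\<rangle>\<close> is the disjoint union of the cosets
  \<open>H g\<^sup>i\<close>, \<open>i < m\<close>, and the extensions of a character \<open>\<psi>\<close> of \<open>H\<close> to \<open>H\<langle>g\<rangle>\<close> correspond to the
  \<open>m\<close>-th roots of \<open>\<psi>(g\<^sup>m)\<close>, the value taken at \<open>g\<close>.\<close>
locale cyclic_adjunction = comm_group +
  fixes H g
  assumes finite_carrier: "finite (carrier G)"
    and subgroup_H: "subgroup H G"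
    and g_carrier: "g \<in> carrier G"
    and g_notin_H: "g \<notin> H"
begin

definition coset_order :: nat where
  "coset_order = (LEAST k. 0 < k \<and> g [^] k \<in> H)"

definition adjoin where
  "adjoin = (\<lambda>(h, i). h \<otimes> g [^] i) ` (H \<times> {..<coset_order})"

lemma H_carrier: "h \<in> H \<Longrightarrow> h \<in> carrier G"
  using subgroup.mem_carrier[OF subgroup_H] .

lemma coset_order: "0 < coset_order" "g [^] coset_order \<in> H"
proof -
  have "\<exists>k::nat. 0 < k \<and> g [^] k \<in> H"
    using pow_order_eq_1[OF g_carrier] finite_carrier order_gt_0_iff_finite subgroup.one_closed[OF subgroup_H]
    by (intro exI[of _ "order G"]) auto
  from LeastI_ex[OF this] show "0 < coset_order" "g [^] coset_order \<in> H"
    unfolding coset_order_def by auto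
qed

lemma pow_notin_H: "0 < k \<Longrightarrow> k < coset_order \<Longrightarrow> g [^] k \<notin> H"
  using not_less_Least unfolding coset_order_def by blast

lemma adjoin_repr_unique:
  assumes "h \<in> H" "h' \<in> H" "i < coset_order" "j < coset_order" "h \<otimes> g [^] i = h' \<otimes> g [^] j"
  shows "h = h' \<and> i = j"
proof -
  have *: "h = h' \<and> i = j"
    if "h \<in> H" "h' \<in> H" "i \<le> j" "j < coset_order" "h \<otimes> g [^] i = h' \<otimes> g [^] j" for h h' i j
  proof -
    have hc: "h \<in> carrier G" "h' \<in> carrier G" using that H_carrier by auto
    have "g [^] j = g [^] i \<otimes> g [^] (j - i)" using g_carrier that(3) by (simp add: nat_pow_mult)
    hence "h \<otimes> g [^] i = (h' \<otimes> g [^] (j - i)) \<otimes> g [^] i" using that(5) hc g_carrier by (simp add: m_ac)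
    hence h: "h = h' \<otimes> g [^] (j - i)" using hc g_carrier by (metis m_closed nat_pow_closed right_cancel)
    hence "g [^] (j - i) = inv h' \<otimes> h" using hc g_carrier by (simp add: m_assoc[symmetric])
    hence "g [^] (j - i) \<in> H"
      using subgroup.m_closed[OF subgroup_H subgroup.m_inv_closed[OF subgroup_H that(2)] that(1)] by simp
    hence "j - i = 0" using pow_notin_H[of "j - i"] that by linarith
    thus ?thesis using h hc that by simp
  qed
  show ?thesis using *[of h h' i j] *[of h' h j i] assms by (cases "i \<le> j") auto
qed

lemma mult_pow_reduce:
  assumes "h \<in> H"
  shows "h \<otimes> g [^] (n::nat) = (h \<otimes> (g [^] coset_order) [^] (n div coset_order)) \<otimes> g [^] (n mod coset_order)"
proof -
  have "g [^] n = g [^] (coset_order * (n div coset_order)) \<otimes> g [^] (n mod coset_order)"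
    using g_carrier by (simp add: nat_pow_mult)
  also have "g [^] (coset_order * (n div coset_order)) = (g [^] coset_order) [^] (n div coset_order)"
    using g_carrier by (simp add: nat_pow_pow)
  finally show ?thesis using assms H_carrier g_carrier by (simp add: m_assoc)
qed

lemma mult_pow_in_adjoin:
  assumes "h \<in> H" shows "h \<otimes> g [^] (n::nat) \<in> adjoin"
proof -
  let ?h' = "h \<otimes> (g [^] coset_order) [^] (n div coset_order)"
  have "?h' \<in> H"
    using assms subgroup_nat_pow_closed[OF subgroup_H coset_order(2)] by (intro subgroup.m_closed[OF subgroup_H])
  moreover have "n mod coset_order < coset_order" using coset_order(1) by simp
  ultimately show ?thesis unfolding adjoin_def mult_pow_reduce[OF assms] by force
qed

lemma H_subset_adjoin: "H \<subseteq> adjoin"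
  using mult_pow_in_adjoin[of _ "0::nat"] H_carrier by fastforce

lemma g_in_adjoin: "g \<in> adjoin"
  using mult_pow_in_adjoin[OF subgroup.one_closed[OF subgroup_H], of "1::nat"] g_carrier by simp

lemma H_psubset_adjoin: "H \<subset> adjoin"
  using H_subset_adjoin g_in_adjoin g_notin_H by blast

lemma subgroup_adjoin: "subgroup adjoin G"
proof (rule subgroupI)
  show "adjoin \<subseteq> carrier G" unfolding adjoin_def using H_carrier g_carrier by auto
  show "adjoin \<noteq> {}" using g_in_adjoin by blast
next
  fix a assume "a \<in> adjoin"
  then obtain h and i :: nat where hi: "h \<in> H" "a = h \<otimes> g [^] i" unfolding adjoin_def by auto
  let ?m = coset_order
  have hc: "h \<in> carrier G" using hi H_carrier by auto
  have "(g [^] ?m) [^] i = g [^] (?m * i - i) \<otimes> g [^] i"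
    using g_carrier coset_order(1) by (simp add: nat_pow_pow nat_pow_mult)
  hence "inv (g [^] i) = inv ((g [^] ?m) [^] i) \<otimes> g [^] (?m * i - i)"
    using g_carrier by (simp add: inv_mult m_assoc[symmetric] m_comm[of _ "g [^] (?m * i - i)"])
  hence "inv a = (inv h \<otimes> inv ((g [^] ?m) [^] i)) \<otimes> g [^] (?m * i - i)"
    using hi hc g_carrier by (simp add: inv_mult m_ac)
  moreover have "inv h \<otimes> inv ((g [^] ?m) [^] i) \<in> H"
    using hi subgroup_nat_pow_closed[OF subgroup_H coset_order(2)]
    by (intro subgroup.m_closed[OF subgroup_H] subgroup.m_inv_closed[OF subgroup_H])
  ultimately show "inv a \<in> adjoin" using mult_pow_in_adjoin by simp
next
  fix a b assume "a \<in> adjoin" "b \<in> adjoin"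
  then obtain h h' and i j :: nat where hi: "h \<in> H" "a = h \<otimes> g [^] i" "h' \<in> H" "b = h' \<otimes> g [^] j"
    unfolding adjoin_def by auto
  have "a \<otimes> b = (h \<otimes> h') \<otimes> g [^] (i + j)"
    using hi H_carrier g_carrier by (simp add: m_ac nat_pow_mult[symmetric])
  thus "a \<otimes> b \<in> adjoin" using mult_pow_in_adjoin hi subgroup.m_closed[OF subgroup_H] by simp
qed

lemma card_adjoin: "card adjoin = coset_order * card H"
proof -
  have "inj_on (\<lambda>(h, i). h \<otimes> g [^] i) (H \<times> {..<coset_order})"
    using adjoin_repr_unique by (intro inj_onI) auto
  hence "card adjoin = card (H \<times> {..<coset_order})" unfolding adjoin_def by (rule card_image)
  thus ?thesis by (simp add: card_cartesian_product)
qed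

end

locale char_extension_step = cyclic_adjunction +
  fixes \<psi>
  assumes char_on_\<psi>: "char_on G H \<psi>"
begin

definition extend :: "complex \<Rightarrow> 'a \<Rightarrow> complex" where
  "extend z x = (if x \<in> adjoin
     then THE v. \<exists>h\<in>H. \<exists>i<coset_order. x = h \<otimes> g [^] i \<and> v = \<psi> h * z ^ i else 0)"

lemma extend_mult_pow:
  assumes h: "h \<in> H" and z: "z ^ coset_order = \<psi> (g [^] coset_order)"
  shows "extend z (h \<otimes> g [^] (n::nat)) = \<psi> h * z ^ n"
proof -
  let ?m = coset_order
  have \<psi>_mult: "\<psi> (x \<otimes> y) = \<psi> x * \<psi> y" if "x \<in> H" "y \<in> H" for x y
    using char_on_\<psi> that unfolding char_on_def by blast
  have extend_repr: "extend z (h' \<otimes> g [^] i) = \<psi> h' * z ^ i" if "h' \<in> H" "i < ?m" for h' i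
  proof -
    have "(THE v. \<exists>h''\<in>H. \<exists>i'<?m. h' \<otimes> g [^] i = h'' \<otimes> g [^] i' \<and> v = \<psi> h'' * z ^ i') = \<psi> h' * z ^ i"
      using that adjoin_repr_unique by (intro the_equality) blast+
    thus ?thesis using mult_pow_in_adjoin[OF that(1)] unfolding extend_def by simp
  qed
  let ?h' = "h \<otimes> (g [^] ?m) [^] (n div ?m)"
  have gm: "(g [^] ?m) [^] (n div ?m) \<in> H" using subgroup_nat_pow_closed[OF subgroup_H coset_order(2)] .
  have "extend z (h \<otimes> g [^] n) = \<psi> ?h' * z ^ (n mod ?m)"
    unfolding mult_pow_reduce[OF h]
    using coset_order(1) gm h by (intro extend_repr subgroup.m_closed[OF subgroup_H]) auto
  also have "\<psi> ?h' = \<psi> h * z ^ (?m * (n div ?m))"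
    using \<psi>_mult[OF h gm] char_on_pow[OF subgroup_H char_on_\<psi> coset_order(2)] z
    by (simp add: power_mult)
  finally show ?thesis by (simp flip: power_add)
qed

lemma extend_in_char_extensions:
  assumes z: "z ^ coset_order = \<psi> (g [^] coset_order)"
  shows "extend z \<in> char_extensions G H \<psi> adjoin"
  unfolding char_extensions_def char_on_def
proof (intro CollectI conjI ballI allI impI)
  fix x y assume "x \<in> adjoin" "y \<in> adjoin"
  then obtain h h' and i j :: nat where hi: "h \<in> H" "x = h \<otimes> g [^] i" "h' \<in> H" "y = h' \<otimes> g [^] j"
    unfolding adjoin_def by auto
  have "x \<otimes> y = (h \<otimes> h') \<otimes> g [^] (i + j)"
    using hi H_carrier g_carrier by (simp add: m_ac nat_pow_mult[symmetric])
  hence "extend z (x \<otimes> y) = \<psi> (h \<otimes> h') * z ^ (i + j)"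
    using extend_mult_pow subgroup.m_closed[OF subgroup_H hi(1,3)] z by simp
  also have "\<dots> = (\<psi> h * z ^ i) * (\<psi> h' * z ^ j)"
    using char_on_\<psi> hi(1,3) unfolding char_on_def by (simp add: power_add)
  finally show "extend z (x \<otimes> y) = extend z x * extend z y"
    using hi extend_mult_pow z by simp
next
  show "extend z \<one> = 1"
    using extend_mult_pow[OF subgroup.one_closed[OF subgroup_H] z, of 0] char_on_\<psi>
    by (simp add: char_on_def)
next
  fix x assume "x \<notin> adjoin" thus "extend z x = 0" unfolding extend_def by simp
next
  fix x assume x: "x \<in> H"
  show "extend z x = \<psi> x" using extend_mult_pow[OF x z, of 0] x H_carrier by simp
qed

lemma char_extension_eq_extend:
  assumes f: "f \<in> char_extensions G H \<psi> adjoin"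
  shows "f g ^ coset_order = \<psi> (g [^] coset_order)" and "f = extend (f g)"
proof -
  have f_char: "char_on G adjoin f" and f_ext: "\<And>x. x \<in> H \<Longrightarrow> f x = \<psi> x"
    using f unfolding char_extensions_def by auto
  note f_pow = char_on_pow[OF subgroup_adjoin f_char g_in_adjoin]
  show fg: "f g ^ coset_order = \<psi> (g [^] coset_order)"
    using f_pow f_ext[OF coset_order(2)] by simp
  show "f = extend (f g)"
  proof (rule char_on_eqI[OF f_char])
    show "char_on G adjoin (extend (f g))"
      using extend_in_char_extensions[OF fg] unfolding char_extensions_def by simp
  next
    fix x assume "x \<in> adjoin"
    then obtain h and i :: nat where hi: "h \<in> H" "x = h \<otimes> g [^] i" unfolding adjoin_def by auto
    have "h \<in> adjoin" "g [^] i \<in> adjoin"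
      using H_subset_adjoin hi(1) subgroup_nat_pow_closed[OF subgroup_adjoin g_in_adjoin] by auto
    hence "f x = f h * f (g [^] i)" using f_char hi unfolding char_on_def by simp
    also have "\<dots> = extend (f g) x" using f_ext[OF hi(1)] f_pow extend_mult_pow[OF hi(1) fg] hi by simp
    finally show "f x = extend (f g) x" .
  qed
qed

lemma char_extensions_adjoin_eq:
  "char_extensions G H \<psi> adjoin = extend ` {z. z ^ coset_order = \<psi> (g [^] coset_order)}"
  using char_extension_eq_extend extend_in_char_extensions by blast

lemma card_char_extensions_adjoin:
  "finite (char_extensions G H \<psi> adjoin) \<and> card (char_extensions G H \<psi> adjoin) = coset_order"
proof -
  let ?R = "{z. z ^ coset_order = \<psi> (g [^] coset_order)}"
  have nonzero: "\<psi> (g [^] coset_order) \<noteq> 0"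
    using char_on_nonzero[OF subgroup_H char_on_\<psi> coset_order(2)] .
  have extend_g: "extend z g = z" if "z \<in> ?R" for z
  proof -
    have "extend z (\<one> \<otimes> g [^] (1::nat)) = \<psi> \<one> * z ^ 1"
      using that by (intro extend_mult_pow[OF subgroup.one_closed[OF subgroup_H]]) simp
    moreover have "\<psi> \<one> = 1" using char_on_\<psi> unfolding char_on_def by blast
    ultimately show ?thesis using g_carrier by simp
  qed
  have "inj_on extend ?R"
  proof (rule inj_onI)
    fix z z' assume "z \<in> ?R" "z' \<in> ?R" "extend z = extend z'"
    thus "z = z'" using extend_g by metis
  qed
  hence "card (extend ` ?R) = card ?R" by (rule card_image)
  thus ?thesis
    unfolding char_extensions_adjoin_eq
    using card_nth_roots[OF nonzero coset_order(1)] finite_nth_roots[OF coset_order(1)] by simp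
qed

end

context comm_group
begin

lemma char_extensions_via_subgroup:
  assumes K: "subgroup K G" and HK: "H \<subseteq> K"
  shows "char_extensions G H \<psi> (carrier G) = (\<Union>\<psi>'\<in>char_extensions G H \<psi> K. char_extensions G K \<psi>' (carrier G))"
proof (intro equalityI subsetI)
  fix f assume "f \<in> char_extensions G H \<psi> (carrier G)"
  hence f: "char_on G (carrier G) f" "\<forall>x\<in>H. f x = \<psi> x" unfolding char_extensions_def by auto
  define \<psi>' where "\<psi>' x = (if x \<in> K then f x else 0)" for x
  have "char_on G K \<psi>'"
    using f(1) subgroup.m_closed[OF K] subgroup.one_closed[OF K] subgroup.mem_carrier[OF K]
    unfolding \<psi>'_def char_on_def by auto
  hence "\<psi>' \<in> char_extensions G H \<psi> K" using f(2) HK unfolding char_extensions_def \<psi>'_def by auto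
  moreover have "f \<in> char_extensions G K \<psi>' (carrier G)"
    using f(1) unfolding char_extensions_def \<psi>'_def by simp
  ultimately show "f \<in> (\<Union>\<psi>'\<in>char_extensions G H \<psi> K. char_extensions G K \<psi>' (carrier G))" by blast
qed (use HK in \<open>auto simp: char_extensions_def\<close>)

lemma char_extensions_disjoint:
  assumes "char_on G K a" "char_on G K b" "a \<noteq> b"
  shows "char_extensions G K a X \<inter> char_extensions G K b X = {}"
  using char_on_eqI[OF assms(1,2)] assms(3) unfolding char_extensions_def by auto

lemma card_char_extensions:
  assumes fin: "finite (carrier G)"
  shows "subgroup H G \<Longrightarrow> char_on G H \<psi> \<Longrightarrow>
    finite (char_extensions G H \<psi> (carrier G)) \<and>
    card (char_extensions G H \<psi> (carrier G)) * card H = card (carrier G)"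
proof (induction "card (carrier G) - card H" arbitrary: H \<psi> rule: less_induct)
  case (less H \<psi>)
  show ?case
  proof (cases "H = carrier G")
    case True
    have "char_extensions G H \<psi> (carrier G) = {\<psi>}"
    proof (intro equalityI subsetI)
      fix f assume "f \<in> char_extensions G H \<psi> (carrier G)"
      thus "f \<in> {\<psi>}"
        using char_on_eqI[of "carrier G" f \<psi>] less.prems(2) True unfolding char_extensions_def by auto
    qed (use less.prems(2) True in \<open>auto simp: char_extensions_def\<close>)
    thus ?thesis using True by simp
  next
    case False
    then obtain g where g: "g \<in> carrier G" "g \<notin> H" using subgroup.subset[OF less.prems(1)] by blast
    interpret E: char_extension_step G H g \<psi>
      by (rule char_extension_step.intro[OF cyclic_adjunction.intro[OF comm_group_axioms
            cyclic_adjunction_axioms.intro[OF fin less.prems(1) g]]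
            char_extension_step_axioms.intro[OF less.prems(2)]])
    let ?K = E.adjoin and ?E = "char_extensions G H \<psi> E.adjoin"
    have K_sub: "?K \<subseteq> carrier G" using subgroup.subset[OF E.subgroup_adjoin] .
    have finK: "finite ?K" using finite_subset[OF K_sub fin] .
    have "card ?K \<noteq> 0" using finK E.g_in_adjoin by auto
    have "card (carrier G) - card ?K < card (carrier G) - card H"
      using psubset_card_mono[OF finK E.H_psubset_adjoin] card_mono[OF fin K_sub] by linarith
    note IH = less.hyps[OF this E.subgroup_adjoin]
    define k where "k = card (carrier G) div card ?K"
    have each: "finite (char_extensions G ?K \<psi>' (carrier G))"
      "card (char_extensions G ?K \<psi>' (carrier G)) = k" if "\<psi>' \<in> ?E" for \<psi>'
    proof -
      have "char_on G ?K \<psi>'" using that unfolding char_extensions_def by blast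
      from IH[OF this] show "finite (char_extensions G ?K \<psi>' (carrier G))"
        "card (char_extensions G ?K \<psi>' (carrier G)) = k"
        unfolding k_def using \<open>card ?K \<noteq> 0\<close> by (metis nonzero_mult_div_cancel_right)+
    qed
    have card_G: "card (carrier G) = k * card ?K"
    proof -
      obtain \<psi>' where "\<psi>' \<in> ?E" using E.card_char_extensions_adjoin E.coset_order(1) by fastforce
      thus ?thesis using IH each unfolding char_extensions_def by force
    qed
    have fin_E: "finite ?E" and card_E: "card ?E = E.coset_order"
      using E.card_char_extensions_adjoin by auto
    have disjoint: "\<forall>a\<in>?E. \<forall>b\<in>?E. a \<noteq> b \<longrightarrow>
        char_extensions G ?K a (carrier G) \<inter> char_extensions G ?K b (carrier G) = {}"
      using char_extensions_disjoint unfolding char_extensions_def by blast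
    have "card (char_extensions G H \<psi> (carrier G)) = (\<Sum>\<psi>'\<in>?E. card (char_extensions G ?K \<psi>' (carrier G)))"
      unfolding char_extensions_via_subgroup[OF E.subgroup_adjoin E.H_subset_adjoin]
      using each(1) by (intro card_UN_disjoint fin_E disjoint) blast
    also have "\<dots> = E.coset_order * k" using each(2) card_E by simp
    finally show ?thesis
      using card_G E.card_adjoin each(1) fin_E
      unfolding char_extensions_via_subgroup[OF E.subgroup_adjoin E.H_subset_adjoin]
      by (simp add: mult_ac)
  qed
qed

end

section \<open>Dirichlet characters as characters of the unit group\<close>

definition units_mod :: "nat \<Rightarrow> nat monoid" where
  "units_mod q = \<lparr>carrier = {n. n < q \<and> coprime n q}, monoid.mult = (\<lambda>x y. x * y mod q), one = 1\<rparr>"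

lemma units_mod_simps:
  "carrier (units_mod q) = {n. n < q \<and> coprime n q}" "x \<otimes>\<^bsub>units_mod q\<^esub> y = x * y mod q"
  "\<one>\<^bsub>units_mod q\<^esub> = 1"
  by (simp_all add: units_mod_def)

lemma comm_group_units_mod:
  assumes "q \<ge> 2" shows "comm_group (units_mod q)"
proof (rule comm_groupI, unfold units_mod_simps)
  fix x y assume "x \<in> {n. n < q \<and> coprime n q}" "y \<in> {n. n < q \<and> coprime n q}"
  thus "x * y mod q \<in> {n. n < q \<and> coprime n q}" using assms by auto
next
  show "1 \<in> {n. n < q \<and> coprime n q}" using assms by auto
next
  fix x y z :: nat
  show "x * y mod q * z mod q = x * (y * z mod q) mod q"
    by (simp add: mod_mult_left_eq mod_mult_right_eq mult.assoc)
next
  fix x y :: nat show "x * y mod q = y * x mod q" by (simp add: mult.commute)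
next
  fix x assume "x \<in> {n. n < q \<and> coprime n q}" thus "1 * x mod q = x" by simp
next
  fix x assume "x \<in> {n. n < q \<and> coprime n q}"
  then obtain y where y: "[x * y = 1] (mod q)" using cong_solve_coprime_nat by auto
  have "coprime (y mod q) q"
    using y assms by (metis cong_imp_coprime cong_sym coprime_1_left coprime_mult_left_iff coprime_mod_left_iff
        not_numeral_le_zero)
  moreover have "y mod q * x mod q = 1"
    using y assms unfolding cong_def by (simp add: mod_mult_right_eq mult.commute)
  ultimately show "\<exists>y\<in>{n. n < q \<and> coprime n q}. y * x mod q = 1"
    using assms by (intro bexI[of _ "y mod q"]) auto
qed

lemma units_mod_eq_totatives: "q \<ge> 2 \<Longrightarrow> carrier (units_mod q) = totatives q"
  by (auto simp: units_mod_simps totatives_def order.order_iff_strict intro!: Nat.gr0I)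

lemma card_units_mod: "q \<ge> 2 \<Longrightarrow> card (carrier (units_mod q)) = totient q"
  by (simp add: units_mod_eq_totatives totient_def)

lemma finite_units_mod: "finite (carrier (units_mod q))"
  by (simp add: units_mod_simps)

definition units_cong_1 :: "nat \<Rightarrow> nat \<Rightarrow> nat set" where
  "units_cong_1 q d = {n. n < q \<and> coprime n q \<and> [n = 1] (mod d)}"

lemma subgroup_units_cong_1:
  assumes q: "q \<ge> 2" and d: "d dvd q"
  shows "subgroup (units_cong_1 q d) (units_mod q)"
proof -
  interpret U: comm_group "units_mod q" using comm_group_units_mod[OF q] .
  show ?thesis
  proof (rule U.subgroupI)
    show "units_cong_1 q d \<subseteq> carrier (units_mod q)" unfolding units_cong_1_def units_mod_simps by auto
    show "units_cong_1 q d \<noteq> {}" using q unfolding units_cong_1_def by (auto intro!: exI[of _ 1])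
  next
    fix a assume a: "a \<in> units_cong_1 q d"
    hence a_unit: "a \<in> carrier (units_mod q)" unfolding units_cong_1_def units_mod_simps by auto
    let ?b = "inv\<^bsub>units_mod q\<^esub> a"
    have b_unit: "?b \<in> carrier (units_mod q)" using a_unit by simp
    have "[a * ?b = 1] (mod q)"
      using U.r_inv[OF a_unit] q unfolding units_mod_simps cong_def by simp
    hence "[a * ?b = 1] (mod d)" using d cong_dvd_modulus_nat by blast
    moreover have "[a * ?b = 1 * ?b] (mod d)"
      using a unfolding units_cong_1_def by (blast intro: cong_scalar_right)
    ultimately have "[?b = 1] (mod d)" by (metis cong_def mult_1)
    thus "?b \<in> units_cong_1 q d" using b_unit unfolding units_cong_1_def units_mod_simps by blast
  next
    fix a b assume "a \<in> units_cong_1 q d" "b \<in> units_cong_1 q d"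
    hence ab: "a < q" "coprime a q" "[a = 1] (mod d)" "b < q" "coprime b q" "[b = 1] (mod d)"
      unfolding units_cong_1_def by auto
    have "[a * b mod q = a * b] (mod d)" using d by (simp add: cong_def mod_mod_cancel)
    also have "[a * b = 1 * 1] (mod d)" using ab by (intro cong_mult) auto
    finally have "[a * b mod q = 1] (mod d)" by simp
    thus "a \<otimes>\<^bsub>units_mod q\<^esub> b \<in> units_cong_1 q d"
      using ab q unfolding units_cong_1_def units_mod_simps by auto
  qed
qed

text \<open>The fibres of reduction modulo \<open>d\<close> are indexed by residues coprime to \<open>d\<close>, and each of
  them is mapped injectively into \<^term>\<open>units_cong_1 q d\<close> by multiplying with the inverse of one of
  its elements.\<close>
lemma totient_le_totient_mult_card_units_cong_1:
  assumes q: "q \<ge> 2" and d: "d dvd q"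
  shows "totient q \<le> totient d * card (units_cong_1 q d)"
proof -
  interpret U: comm_group "units_mod q" using comm_group_units_mod[OF q] .
  let ?U = "carrier (units_mod q)"
  define fiber where "fiber r = {n \<in> ?U. [n = r] (mod d)}" for r
  have d0: "d > 0" using d q by (auto intro!: Nat.gr0I)
  have residues: "(\<lambda>n. n mod d) ` ?U \<subseteq> {r. r < d \<and> coprime r d}"
    using d d0 by (auto simp: units_mod_simps dest: coprime_imp_coprime[of _ q _ d] intro: dvd_trans)
  have card_fiber: "card (fiber r) \<le> card (units_cong_1 q d)" if "r \<in> (\<lambda>n. n mod d) ` ?U" for r
  proof -
    from that obtain a where a: "a \<in> ?U" "r = a mod d" by blast
    let ?b = "inv\<^bsub>units_mod q\<^esub> a"
    have b_unit: "?b \<in> ?U" using a by simp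
    have "[?b * a = 1] (mod q)" using U.l_inv[OF a(1)] q unfolding cong_def units_mod_simps by simp
    hence ba: "[?b * a = 1] (mod d)" using cong_dvd_modulus_nat[OF _ d] by blast
    have "inj_on (\<lambda>n. ?b \<otimes>\<^bsub>units_mod q\<^esub> n) (fiber r)"
      using b_unit by (intro inj_onI) (auto simp: fiber_def)
    moreover have "(\<lambda>n. ?b \<otimes>\<^bsub>units_mod q\<^esub> n) ` fiber r \<subseteq> units_cong_1 q d"
    proof
      fix y assume "y \<in> (\<lambda>n. ?b \<otimes>\<^bsub>units_mod q\<^esub> n) ` fiber r"
      then obtain n where n: "n \<in> ?U" "[n = a] (mod d)" "y = ?b \<otimes>\<^bsub>units_mod q\<^esub> n"
        using a(2) unfolding fiber_def cong_def by auto
      have "[?b * n mod q = ?b * n] (mod d)" using d by (simp add: cong_def mod_mod_cancel)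
      also have "[?b * n = ?b * a] (mod d)" using n(2) by (rule cong_scalar_left)
      also note ba
      finally show "y \<in> units_cong_1 q d"
        using n b_unit unfolding units_cong_1_def units_mod_simps by simp
    qed
    moreover have "finite (units_cong_1 q d)"
      unfolding units_cong_1_def by (rule finite_subset[of _ "{..<q}"]) auto
    ultimately show ?thesis by (metis card_image card_mono)
  qed
  have "?U = (\<Union>r\<in>(\<lambda>n. n mod d) ` ?U. fiber r)" unfolding fiber_def cong_def by auto
  hence "totient q = card (\<Union>r\<in>(\<lambda>n. n mod d) ` ?U. fiber r)" using card_units_mod[OF q] by simp
  also have "\<dots> \<le> (\<Sum>r\<in>(\<lambda>n. n mod d) ` ?U. card (fiber r))"
    using finite_units_mod by (intro card_UN_le) auto
  also have "\<dots> \<le> card ((\<lambda>n. n mod d) ` ?U) * card (units_cong_1 q d)"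
    using sum_bounded_above[OF card_fiber] by simp
  also have "\<dots> \<le> totient d * card (units_cong_1 q d)"
  proof -
    have "card ((\<lambda>n. n mod d) ` ?U) \<le> card {r. r < d \<and> coprime r d}"
      using residues by (intro card_mono) auto
    also have "\<dots> \<le> totient d"
      using d0 by (cases "d = 1") (auto simp: card_units_mod[unfolded units_mod_simps])
    finally show ?thesis by simp
  qed
  finally show ?thesis .
qed

lemma dirichlet_char_mod:
  assumes "dirichlet_char q c" shows "c (n mod q) = c n"
proof -
  have "c (m + k * q) = c m" for m k
  proof (induction k)
    case (Suc k)
    have "c (m + Suc k * q) = c ((m + k * q) + q)" by (simp add: algebra_simps)
    thus ?case using Suc.IH assms unfolding dirichlet_char_def by simp
  qed simp
  from this[of "n mod q" "n div q"] show ?thesis by simp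
qed

lemma char_on_units_mod_restrict:
  assumes q: "q \<ge> 2" and c: "dirichlet_char q c"
  shows "char_on (units_mod q) (carrier (units_mod q)) (\<lambda>n. if n \<in> carrier (units_mod q) then c n else 0)"
proof -
  have "c (x * y mod q) = c x * c y" for x y
    using dirichlet_char_mod[OF c, of "x * y"] c unfolding dirichlet_char_def by simp
  thus ?thesis using q c unfolding char_on_def dirichlet_char_def by (auto simp: units_mod_simps)
qed

lemma dirichlet_char_lift:
  assumes q: "q \<ge> 2" and f: "char_on (units_mod q) (carrier (units_mod q)) f"
  shows "dirichlet_char q (\<lambda>n. f (n mod q))"
  unfolding dirichlet_char_def
proof (intro conjI allI)
  interpret U: comm_group "units_mod q" using comm_group_units_mod[OF q] .
  have unit_iff: "n mod q \<in> carrier (units_mod q) \<longleftrightarrow> coprime n q" for n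
    using q by (simp add: units_mod_simps)
  show "q > 0" "f (1 mod q) = 1" using q f by (simp_all add: char_on_def units_mod_simps)
  fix m n
  show "f ((n + q) mod q) = f (n mod q)" by simp
  show "f (m * n mod q) = f (m mod q) * f (n mod q)"
  proof (cases "coprime m q \<and> coprime n q")
    case True
    hence "f ((m mod q) * (n mod q) mod q) = f (m mod q) * f (n mod q)"
      using f unit_iff unfolding char_on_def units_mod_simps by blast
    thus ?thesis by (simp add: mod_mult_eq)
  next
    case False
    thus ?thesis using f unit_iff[of "m * n"] unit_iff[of m] unit_iff[of n] unfolding char_on_def by auto
  qed
  show "f (n mod q) \<noteq> 0 \<longleftrightarrow> coprime n q"
    using U.char_on_nonzero[OF U.subgroup_self f] f unit_iff unfolding char_on_def by blast
qed

definition induced_chars :: "nat \<Rightarrow> nat \<Rightarrow> (nat \<Rightarrow> complex) set" where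
  "induced_chars q d = {c \<in> dirichlet_chars q. \<forall>n. coprime n q \<and> [n = 1] (mod d) \<longrightarrow> c n = 1}"

lemma bij_betw_induced_chars_extensions:
  assumes q: "q \<ge> 2" and d: "d dvd q"
  shows "bij_betw (\<lambda>c n. if n \<in> carrier (units_mod q) then c n else 0) (induced_chars q d)
    (char_extensions (units_mod q) (units_cong_1 q d) (\<lambda>n. if n \<in> units_cong_1 q d then 1 else 0)
      (carrier (units_mod q)))"
proof (rule bij_betw_byWitness[where f' = "\<lambda>f n. f (n mod q)"])
  show "\<forall>c\<in>induced_chars q d. (\<lambda>n. if n mod q \<in> carrier (units_mod q) then c (n mod q) else 0) = c"
  proof (intro ballI ext)
    fix c n assume "c \<in> induced_chars q d"
    hence c: "dirichlet_char q c" by (simp add: induced_chars_def dirichlet_chars_def)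
    show "(if n mod q \<in> carrier (units_mod q) then c (n mod q) else 0) = c n"
      using dirichlet_char_mod[OF c, of n] c q by (auto simp: dirichlet_char_def units_mod_simps)
  qed
  show "\<forall>f\<in>char_extensions (units_mod q) (units_cong_1 q d) (\<lambda>n. if n \<in> units_cong_1 q d then 1 else 0)
      (carrier (units_mod q)). (\<lambda>n. if n \<in> carrier (units_mod q) then f (n mod q) else 0) = f"
    by (auto simp: char_extensions_def char_on_def units_mod_simps)
  show "(\<lambda>c n. if n \<in> carrier (units_mod q) then c n else 0) ` induced_chars q d \<subseteq>
    char_extensions (units_mod q) (units_cong_1 q d) (\<lambda>n. if n \<in> units_cong_1 q d then 1 else 0)
      (carrier (units_mod q))"
    using char_on_units_mod_restrict[OF q]
    by (auto simp: char_extensions_def induced_chars_def dirichlet_chars_def units_cong_1_def units_mod_simps)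
  show "(\<lambda>f n. f (n mod q)) ` char_extensions (units_mod q) (units_cong_1 q d)
      (\<lambda>n. if n \<in> units_cong_1 q d then 1 else 0) (carrier (units_mod q)) \<subseteq> induced_chars q d"
  proof (safe)
    fix f assume f: "f \<in> char_extensions (units_mod q) (units_cong_1 q d)
      (\<lambda>n. if n \<in> units_cong_1 q d then 1 else 0) (carrier (units_mod q))"
    have "n mod q \<in> units_cong_1 q d" if "coprime n q" "[n = 1] (mod d)" for n
      using that q d by (auto simp: units_cong_1_def cong_def mod_mod_cancel)
    thus "(\<lambda>n. f (n mod q)) \<in> induced_chars q d"
      using f dirichlet_char_lift[OF q]
      by (auto simp: char_extensions_def induced_chars_def dirichlet_chars_def)
  qed
qed

lemma card_induced_chars:
  assumes q: "q \<ge> 2" and d: "d dvd q"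
  shows "finite (induced_chars q d) \<and> card (induced_chars q d) * card (units_cong_1 q d) = totient q"
proof -
  interpret U: comm_group "units_mod q" using comm_group_units_mod[OF q] .
  note bij = bij_betw_induced_chars_extensions[OF q d]
  show ?thesis
    using U.card_char_extensions[OF finite_units_mod subgroup_units_cong_1[OF q d]
        U.char_on_trivial[OF subgroup_units_cong_1[OF q d]]]
      bij_betw_same_card[OF bij] bij_betw_finite[OF bij] card_units_mod[OF q]
    by simp
qed

lemma card_induced_chars_le:
  assumes q: "q \<ge> 2" and d: "d dvd q"
  shows "card (induced_chars q d) \<le> totient d"
proof -
  have "1 \<in> units_cong_1 q d" using q by (simp add: units_cong_1_def)
  moreover have "finite (units_cong_1 q d)" by (simp add: units_cong_1_def)
  ultimately have "card (units_cong_1 q d) > 0" by (auto simp: card_gt_0_iff)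
  moreover have "card (induced_chars q d) * card (units_cong_1 q d) \<le> totient d * card (units_cong_1 q d)"
    using card_induced_chars[OF q d] totient_le_totient_mult_card_units_cong_1[OF q d] by simp
  ultimately show ?thesis by simp
qed

lemma induced_chars_modulus:
  assumes "q \<ge> 2" shows "induced_chars q q = dirichlet_chars q"
proof -
  have "c n = 1" if "dirichlet_char q c" "[n = 1] (mod q)" for c n
    using dirichlet_char_mod[OF that(1), of n] that assms by (simp add: dirichlet_char_def cong_def)
  thus ?thesis by (auto simp: induced_chars_def dirichlet_chars_def)
qed

lemma finite_dirichlet_chars: "q \<ge> 2 \<Longrightarrow> finite (dirichlet_chars q)"
  using card_induced_chars[of q q] induced_chars_modulus by simp

lemma card_dirichlet_chars: "q \<ge> 2 \<Longrightarrow> card (dirichlet_chars q) = totient q"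
proof -
  assume q: "q \<ge> 2"
  hence "units_cong_1 q q = {1}" by (auto simp: units_cong_1_def cong_def)
  thus ?thesis using card_induced_chars[OF q dvd_refl] induced_chars_modulus[OF q] by simp
qed

section \<open>Counting characters by conductor\<close>

lemma conductor_LeastI:
  assumes q: "q \<ge> 2" and c: "c \<in> dirichlet_chars q"
  shows "conductor q c > 0 \<and> conductor q c dvd q \<and> c \<in> induced_chars q (conductor q c)"
proof -
  have "q > 0 \<and> q dvd q \<and> (\<forall>n. coprime n q \<and> [n = 1] (mod q) \<longrightarrow> c n = 1)"
    using q c induced_chars_modulus[OF q] by (auto simp: induced_chars_def)
  hence "conductor q c > 0 \<and> conductor q c dvd q \<and>
      (\<forall>n. coprime n q \<and> [n = 1] (mod conductor q c) \<longrightarrow> c n = 1)"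
    unfolding conductor_def by (rule LeastI)
  thus ?thesis using c by (simp add: induced_chars_def)
qed

lemma induced_chars_mono: "d dvd d' \<Longrightarrow> induced_chars q d \<subseteq> induced_chars q d'"
  by (auto simp: induced_chars_def intro: cong_dvd_modulus_nat)

lemma card_chars_dvd_index_le:
  assumes q: "q \<ge> 2" and m: "m dvd q"
  shows "card {c \<in> dirichlet_chars q. m dvd q div conductor q c} \<le> totient (q div m)"
proof -
  have "{c \<in> dirichlet_chars q. m dvd q div conductor q c} \<subseteq> induced_chars q (q div m)"
  proof safe
    fix c assume c: "c \<in> dirichlet_chars q" and "m dvd q div conductor q c"
    note cond = conductor_LeastI[OF q c]
    have "m > 0" using m q by (auto intro!: Nat.gr0I)
    have "m * conductor q c dvd q" using \<open>m dvd q div conductor q c\<close> cond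
      by (simp add: dvd_div_iff_mult)
    hence "conductor q c dvd q div m" using m \<open>m > 0\<close> by (simp add: dvd_div_iff_mult mult.commute)
    thus "c \<in> induced_chars q (q div m)" using cond induced_chars_mono by blast
  qed
  hence "card {c \<in> dirichlet_chars q. m dvd q div conductor q c} \<le> card (induced_chars q (q div m))"
    using card_induced_chars[OF q] m by (intro card_mono) auto
  also have "\<dots> \<le> totient (q div m)" using card_induced_chars_le[OF q] m by auto
  finally show ?thesis .
qed

lemma totient_mult_ge: "totient a * totient b \<le> totient (a * b)"
proof (cases "a = 0 \<or> b = 0")
  case False
  have "totient a * totient b * gcd a b = totient (a * b) * totient (gcd a b)"
    using totient_gcd[of a b] by simp
  also have "\<dots> \<le> totient (a * b) * gcd a b" by (intro mult_left_mono totient_le) auto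
  finally show ?thesis using False by simp
qed auto

lemma card_chars_dvd_index_le_real:
  assumes q: "q \<ge> 2" and m: "m dvd q"
  shows "real (card {c \<in> dirichlet_chars q. m dvd q div conductor q c}) \<le> real (totient q) / real (totient m)"
proof -
  have "totient m > 0" using m q by (auto intro!: Nat.gr0I)
  have "card {c \<in> dirichlet_chars q. m dvd q div conductor q c} * totient m \<le> totient (q div m) * totient m"
    using card_chars_dvd_index_le[OF q m] by simp
  also have "\<dots> \<le> totient q" using totient_mult_ge[of "q div m" m] m by simp
  finally show ?thesis using \<open>totient m > 0\<close> by (simp add: field_simps flip: of_nat_mult)
qed

lemma cnj_in_dirichlet_chars:
  "c \<in> dirichlet_chars q \<Longrightarrow> (\<lambda>n. cnj (c n)) \<in> dirichlet_chars q"
  unfolding dirichlet_chars_def dirichlet_char_def by auto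

lemma cnj_in_dirichlet_chars_iff: "(\<lambda>n. cnj (c n)) \<in> dirichlet_chars q \<longleftrightarrow> c \<in> dirichlet_chars q"
  using cnj_in_dirichlet_chars[of c q] cnj_in_dirichlet_chars[of "\<lambda>n. cnj (c n)" q] by auto

lemma conductor_cnj: "conductor q (\<lambda>n. cnj (c n)) = conductor q c"
proof -
  have "cnj (c n) = 1 \<longleftrightarrow> c n = 1" for n by (metis complex_cnj_cnj complex_cnj_one)
  thus ?thesis unfolding conductor_def by simp
qed

lemma abs_ln_conductor_diff:
  assumes q: "q \<ge> 2" and c: "c \<in> dirichlet_chars q"
  shows "\<bar>ln (real (conductor q c)) - ln (real q)\<bar> = ln (real (q div conductor q c))"
proof -
  have pos: "conductor q c > 0" and dvd: "conductor q c dvd q" using conductor_LeastI[OF q c] by auto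
  hence "conductor q c \<le> q" using q by (intro dvd_imp_le) auto
  moreover have "real (q div conductor q c) = real q / real (conductor q c)"
    using dvd by (simp add: real_of_nat_div)
  ultimately show ?thesis using pos q by (simp add: ln_div)
qed

section \<open>The second moment of \<open>ln (q / q\<^sub>\<chi>)\<close>\<close>

definition prime_power_pairs :: "nat \<Rightarrow> (nat \<times> nat) set" where
  "prime_power_pairs q = Sigma (prime_factors q) (\<lambda>p. {1..multiplicity p q})"

lemma prime_power_pairsD:
  assumes "a \<in> prime_power_pairs q"
  shows "prime (fst a)" "0 < snd a" "fst a ^ snd a dvd q"
proof -
  have q: "q \<noteq> 0" and p: "prime (fst a)" and i: "1 \<le> snd a" "snd a \<le> multiplicity (fst a) q"
    using assms unfolding prime_power_pairs_def by (auto simp: in_prime_factors_iff)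
  show "prime (fst a)" "0 < snd a" using p i by auto
  show "fst a ^ snd a dvd q"
    using power_dvd_iff_le_multiplicity[of q "fst a" "snd a"] p q i prime_gt_1_nat[OF p] by simp
qed

lemma ln_eq_sum_prime_power_pairs:
  assumes q: "q > 0" and e: "e dvd q"
  shows "ln (real e) = (\<Sum>(p,i)\<in>prime_power_pairs q. if p^i dvd e then ln (real p) else 0)"
proof -
  have e0: "e > 0" using e q by (auto intro!: Nat.gr0I)
  have "real e = (\<Prod>p\<in>prime_factors e. real p ^ multiplicity p e)"
    by (subst prime_factorization_nat[OF e0]) simp
  moreover have "ln (\<Prod>p\<in>prime_factors e. real p ^ multiplicity p e) = (\<Sum>p\<in>prime_factors e. ln (real p ^ multiplicity p e))"
    by (rule ln_prod) (auto simp: in_prime_factors_iff prime_gt_0_nat)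
  ultimately have "ln (real e) = (\<Sum>p\<in>prime_factors e. ln (real p ^ multiplicity p e))" by simp
  also have "\<dots> = (\<Sum>p\<in>prime_factors e. real (multiplicity p e) * ln (real p))"
    by (intro sum.cong refl) (simp add: ln_realpow prime_gt_0_nat in_prime_factors_iff)
  also have "\<dots> = (\<Sum>p\<in>prime_factors q. real (multiplicity p e) * ln (real p))"
  proof (rule sum.mono_neutral_left)
    show "finite (prime_factors q)" by simp
    show "prime_factors e \<subseteq> prime_factors q" using e q e0 by (auto simp: in_prime_factors_iff intro: dvd_trans)
    show "\<forall>p\<in>prime_factors q - prime_factors e. real (multiplicity p e) * ln (real p) = 0"
      using e0 by (auto simp: in_prime_factors_iff not_dvd_imp_multiplicity_0)
  qed
  also have "\<dots> = (\<Sum>p\<in>prime_factors q. \<Sum>i\<in>{1..multiplicity p q}. if p^i dvd e then ln (real p) else 0)"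
  proof (intro sum.cong refl)
    fix p assume p: "p \<in> prime_factors q"
    hence pp: "prime p" by (simp add: in_prime_factors_iff)
    have nu: "\<not> is_unit p" using pp prime_gt_1_nat by auto
    have le: "multiplicity p e \<le> multiplicity p q" using dvd_imp_multiplicity_le[OF e] q by simp
    have iff: "p^i dvd e \<longleftrightarrow> i \<le> multiplicity p e" for i
      using power_dvd_iff_le_multiplicity[of e p i] e0 nu by simp
    have "{1..multiplicity p q} \<inter> {i. p^i dvd e} = {1..multiplicity p e}"
      unfolding iff using le by auto
    hence "(\<Sum>i\<in>{1..multiplicity p q}. if p^i dvd e then ln (real p) else 0) = real (multiplicity p e) * ln (real p)"
      by (simp add: sum.If_cases)
    thus "real (multiplicity p e) * ln (real p) = (\<Sum>i\<in>{1..multiplicity p q}. if p^i dvd e then ln (real p) else 0)" by simp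
  qed
  also have "\<dots> = (\<Sum>(p,i)\<in>prime_power_pairs q. if p^i dvd e then ln (real p) else 0)"
    unfolding prime_power_pairs_def by (subst sum.Sigma) auto
  finally show ?thesis .
qed

lemma sum_sq_sum_if_eq:
  fixes w :: "'b \<Rightarrow> real"
  assumes "finite X"
  shows "(\<Sum>x\<in>X. (\<Sum>a\<in>A. if P x a then w a else 0)\<^sup>2) =
    (\<Sum>a\<in>A. \<Sum>b\<in>A. w a * w b * real (card {x \<in> X. P x a \<and> P x b}))"
proof -
  let ?f = "\<lambda>x a. if P x a then w a else 0"
  have "(\<Sum>x\<in>X. (\<Sum>a\<in>A. ?f x a)\<^sup>2) = (\<Sum>x\<in>X. \<Sum>a\<in>A. \<Sum>b\<in>A. ?f x a * ?f x b)"
    by (simp only: power2_eq_square sum_product)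
  also have "\<dots> = (\<Sum>a\<in>A. \<Sum>x\<in>X. \<Sum>b\<in>A. ?f x a * ?f x b)" by (rule sum.swap)
  also have "\<dots> = (\<Sum>a\<in>A. \<Sum>b\<in>A. \<Sum>x\<in>X. ?f x a * ?f x b)" by (intro sum.cong refl sum.swap)
  also have "\<dots> = (\<Sum>a\<in>A. \<Sum>b\<in>A. \<Sum>x\<in>X. if P x a \<and> P x b then w a * w b else 0)"
    by (intro sum.cong refl) auto
  also have "\<dots> = (\<Sum>a\<in>A. \<Sum>b\<in>A. w a * w b * real (card {x \<in> X. P x a \<and> P x b}))"
    using assms by (simp add: sum.inter_filter[symmetric] mult.commute)
  finally show ?thesis .
qed

lemma totient_prime_power_ge: assumes "prime p" "k > 0" shows "real (totient (p^k)) \<ge> real p ^ k / 2"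
proof -
  have p2: "p \<ge> 2" using prime_ge_2_nat[OF assms(1)] .
  have "real (totient (p^k)) = real p ^ (k - 1) * (real p - 1)"
    using totient_prime_power[OF assms] p2 by (simp add: of_nat_diff)
  also have "\<dots> \<ge> real p ^ (k - 1) * (real p / 2)" using p2 by (intro mult_left_mono) auto
  finally have "real (totient (p^k)) \<ge> real p ^ (k - 1) * real p / 2" by simp
  also have "real p ^ (k - 1) * real p = real p ^ k" using assms(2)
    by (metis Suc_diff_1 power_Suc2)
  finally show ?thesis .
qed

text \<open>For \<open>a = (p, i)\<close> and \<open>b = (p', j)\<close>, an upper bound for the proportion of characters \<open>\<chi>\<close>
  with both \<open>p\<^sup>i\<close> and \<open>p'\<^sup>j\<close> dividing \<open>q / q\<^sub>\<chi>\<close>.\<close>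
definition joint_density :: "nat \<times> nat \<Rightarrow> nat \<times> nat \<Rightarrow> real" where
  "joint_density a b = (if fst a = fst b then 2 / real (fst a) ^ max (snd a) (snd b)
     else 4 / (real (fst a) ^ snd a * real (fst b) ^ snd b))"

lemma card_chars_joint_dvd_le:
  assumes q: "q \<ge> 2" and a: "a \<in> prime_power_pairs q" and b: "b \<in> prime_power_pairs q"
  shows "real (card {c \<in> dirichlet_chars q.
      fst a ^ snd a dvd q div conductor q c \<and> fst b ^ snd b dvd q div conductor q c})
    \<le> real (totient q) * joint_density a b"
proof -
  obtain p i where ai: "a = (p, i)" by (cases a)
  obtain p' j where bj: "b = (p', j)" by (cases b)
  have p: "prime p" "0 < i" "p ^ i dvd q" and p': "prime p'" "0 < j" "p' ^ j dvd q"
    using prime_power_pairsD[OF a] prime_power_pairsD[OF b] ai bj by auto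
  define S where "S = {c \<in> dirichlet_chars q. p ^ i dvd q div conductor q c \<and> p' ^ j dvd q div conductor q c}"
  have card_S_le: "real (card S) \<le> real (card {c \<in> dirichlet_chars q. m dvd q div conductor q c})"
    if "S \<subseteq> {c \<in> dirichlet_chars q. m dvd q div conductor q c}" for m
    using finite_dirichlet_chars[OF q] that by (intro of_nat_mono card_mono) auto
  have "real (card S) \<le> real (totient q) * joint_density (p, i) (p', j)"
  proof (cases "p = p'")
    case True
    define k where "k = max i j"
    have k: "k > 0" "p ^ k dvd q" using p p' True unfolding k_def by (auto simp: max_def)
    have "S \<subseteq> {c \<in> dirichlet_chars q. p ^ k dvd q div conductor q c}"
      unfolding S_def k_def True by (auto simp: max_def)
    hence "real (card S) \<le> real (totient q) / real (totient (p ^ k))"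
      using card_S_le card_chars_dvd_index_le_real[OF q k(2)] by (blast intro: order_trans)
    also have "\<dots> \<le> real (totient q) / (real p ^ k / 2)"
      using totient_prime_power_ge[OF p(1) k(1)] prime_gt_0_nat[OF p(1)] by (intro divide_left_mono) auto
    finally show ?thesis unfolding joint_density_def k_def using True by simp
  next
    case False
    have cop: "coprime (p ^ i) (p' ^ j)" using False p p' by (simp add: primes_coprime)
    have "S \<subseteq> {c \<in> dirichlet_chars q. p ^ i * p' ^ j dvd q div conductor q c}"
      unfolding S_def using cop by (auto intro: divides_mult)
    hence "real (card S) \<le> real (totient q) / real (totient (p ^ i * p' ^ j))"
      using card_S_le card_chars_dvd_index_le_real[OF q divides_mult[OF p(3) p'(3) cop]]
      by (blast intro: order_trans)
    also have "\<dots> = real (totient q) / (real (totient (p ^ i)) * real (totient (p' ^ j)))"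
      using totient_mult_coprime[OF cop] by simp
    also have "\<dots> \<le> real (totient q) / ((real p ^ i / 2) * (real p' ^ j / 2))"
      using totient_prime_power_ge[OF p(1,2)] totient_prime_power_ge[OF p'(1,2)]
        prime_gt_0_nat[OF p(1)] prime_gt_0_nat[OF p'(1)]
      by (intro divide_left_mono mult_mono mult_pos_pos) auto
    finally show ?thesis unfolding joint_density_def using False by simp
  qed
  thus ?thesis unfolding S_def ai bj by simp
qed

lemma sum_ln_index_sq_le_joint:
  assumes q: "q \<ge> 2"
  shows "(\<Sum>c\<in>dirichlet_chars q. (ln (real (q div conductor q c)))\<^sup>2) \<le> real (totient q) *
    (\<Sum>a\<in>prime_power_pairs q. \<Sum>b\<in>prime_power_pairs q. ln (real (fst a)) * ln (real (fst b)) * joint_density a b)"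
proof -
  let ?P = "\<lambda>c a. fst a ^ snd a dvd q div conductor q c" and ?w = "\<lambda>a. ln (real (fst a))"
  have ln_index: "ln (real (q div conductor q c)) = (\<Sum>a\<in>prime_power_pairs q. if ?P c a then ?w a else 0)"
    if "c \<in> dirichlet_chars q" for c
  proof -
    have "conductor q c > 0" "conductor q c dvd q" using conductor_LeastI[OF q that] by auto
    hence "q div conductor q c dvd q" by (simp add: div_dvd_iff_mult)
    thus ?thesis using ln_eq_sum_prime_power_pairs[of q] q by (simp add: case_prod_beta)
  qed
  have "(\<Sum>c\<in>dirichlet_chars q. (ln (real (q div conductor q c)))\<^sup>2) =
      (\<Sum>c\<in>dirichlet_chars q. (\<Sum>a\<in>prime_power_pairs q. if ?P c a then ?w a else 0)\<^sup>2)"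
    using ln_index by (intro sum.cong refl) presburger
  also have "\<dots> = (\<Sum>a\<in>prime_power_pairs q. \<Sum>b\<in>prime_power_pairs q.
      ?w a * ?w b * real (card {c \<in> dirichlet_chars q. ?P c a \<and> ?P c b}))"
    by (rule sum_sq_sum_if_eq[OF finite_dirichlet_chars[OF q]])
  also have "\<dots> \<le> (\<Sum>a\<in>prime_power_pairs q. \<Sum>b\<in>prime_power_pairs q.
      ?w a * ?w b * (real (totient q) * joint_density a b))"
  proof (intro sum_mono mult_left_mono)
    fix a b assume a: "a \<in> prime_power_pairs q" and b: "b \<in> prime_power_pairs q"
    show "real (card {c \<in> dirichlet_chars q. ?P c a \<and> ?P c b}) \<le> real (totient q) * joint_density a b"
      by (rule card_chars_joint_dvd_le[OF q a b])
    have "?w a \<ge> 0" "?w b \<ge> 0"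
      using prime_gt_0_nat[OF prime_power_pairsD(1)[OF a]] prime_gt_0_nat[OF prime_power_pairsD(1)[OF b]]
      by (simp_all add: Suc_le_eq)
    thus "0 \<le> ?w a * ?w b" by simp
  qed
  also have "\<dots> = real (totient q) * (\<Sum>a\<in>prime_power_pairs q. \<Sum>b\<in>prime_power_pairs q.
      ?w a * ?w b * joint_density a b)"
    by (simp add: sum_distrib_left mult_ac)
  finally show ?thesis .
qed

lemma geometric_sum_le:
  fixes x :: real assumes "0 \<le> x" "x < 1" shows "(\<Sum>i=1..M. x ^ i) \<le> x / (1 - x)"
proof -
  have "(\<Sum>i=1..M. x^i) = (if M < 1 then 0 else (x - x^Suc M) / (1 - x))"
    using assms by (subst sum_gp) auto
  also have "\<dots> \<le> x / (1 - x)" using assms by (auto intro!: divide_right_mono divide_nonneg_nonneg)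
  finally show ?thesis .
qed

lemma inverse_power_max_le:
  fixes p :: nat assumes p: "p \<ge> 2" and ij: "i \<ge> 1" "j \<ge> 1"
  shows "1 / real p ^ max i j \<le> (1 / real p) * ((3/4) ^ (i - 1) * (3/4) ^ (j - 1))"
proof -
  define k where "k = max i j"
  have k1: "k \<ge> 1" using ij unfolding k_def by simp
  have "(4/3::real) ^ (i - 1) * (4/3) ^ (j - 1) = (4/3) ^ (i - 1 + (j - 1))" by (simp add: power_add)
  also have "\<dots> \<le> (4/3) ^ (2 * (k - 1))" unfolding k_def by (intro power_increasing) auto
  also have "\<dots> = (16/9) ^ (k - 1)" by (simp add: power_mult power2_eq_square)
  also have "\<dots> \<le> 2 ^ (k - 1)" by (intro power_mono) auto
  also have "\<dots> \<le> real p ^ (k - 1)" using p by (intro power_mono) auto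
  finally have A: "(4/3::real) ^ (i - 1) * (4/3) ^ (j - 1) \<le> real p ^ (k - 1)" .
  have pk: "real p ^ k = real p * real p ^ (k - 1)" using k1 by (metis Suc_diff_1 less_le_trans power_Suc zero_less_one)
  have pos: "real p ^ (k - 1) > 0" using p by simp
  have e1: "1 / real p ^ k = (1 / real p) * (1 / real p ^ (k - 1))" unfolding pk by simp
  have "1 / real p ^ (k - 1) \<le> 1 / ((4/3) ^ (i - 1) * (4/3) ^ (j - 1))"
    using A pos by (intro divide_left_mono mult_pos_pos) auto
  also have "1 / ((4/3::real) ^ (i - 1) * (4/3) ^ (j - 1)) = (3/4) ^ (i - 1) * (3/4) ^ (j - 1)"
    by (simp add: power_divide)
  finally have B: "1 / real p ^ (k - 1) \<le> (3/4) ^ (i - 1) * (3/4) ^ (j - 1)" .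
  have "1 / real p ^ k \<le> (1 / real p) * ((3/4) ^ (i - 1) * (3/4) ^ (j - 1))"
    unfolding e1 using B p by (intro mult_left_mono) auto
  thus ?thesis unfolding k_def .
qed

lemma sum_prime_power_pairs_ln_le:
  "(\<Sum>a\<in>prime_power_pairs q. ln (real (fst a)) / real (fst a) ^ snd a)
    \<le> 2 * (\<Sum>p\<in>prime_factors q. ln (real p) / real p)"
proof -
  have "(\<Sum>a\<in>prime_power_pairs q. ln (real (fst a)) / real (fst a) ^ snd a) =
      (\<Sum>p\<in>prime_factors q. \<Sum>i\<in>{1..multiplicity p q}. ln (real p) * (1 / real p) ^ i)"
    unfolding prime_power_pairs_def by (subst sum.Sigma) (auto simp: power_divide case_prod_beta)
  also have "\<dots> \<le> (\<Sum>p\<in>prime_factors q. ln (real p) * (2 / real p))"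
  proof (intro sum_mono)
    fix p assume "p \<in> prime_factors q"
    hence p2: "real p \<ge> 2" by (auto simp: in_prime_factors_iff dest: prime_ge_2_nat)
    have "(\<Sum>i=1..multiplicity p q. (1 / real p) ^ i) \<le> (1 / real p) / (1 - 1 / real p)"
      using p2 by (intro geometric_sum_le) auto
    also have "\<dots> \<le> 2 / real p" using p2 by (simp add: field_simps)
    finally have "ln (real p) * (\<Sum>i=1..multiplicity p q. (1 / real p) ^ i) \<le> ln (real p) * (2 / real p)"
      using p2 by (intro mult_left_mono) auto
    thus "(\<Sum>i\<in>{1..multiplicity p q}. ln (real p) * (1 / real p) ^ i) \<le> ln (real p) * (2 / real p)"
      by (simp only: sum_distrib_left)
  qed
  also have "\<dots> = 2 * (\<Sum>p\<in>prime_factors q. ln (real p) / real p)"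
    by (simp add: sum_distrib_left mult_ac)
  finally show ?thesis .
qed

lemma sum_same_prime_pairs_le:
  "(\<Sum>a\<in>prime_power_pairs q. \<Sum>b\<in>prime_power_pairs q. if fst a = fst b
      then ln (real (fst a)) * ln (real (fst b)) * (2 / real (fst a) ^ max (snd a) (snd b)) else 0)
    \<le> 32 * (\<Sum>p\<in>prime_factors q. ln (real p) ^ 2 / real p)"
proof -
  define M where "M p = multiplicity p q" for p
  have inner: "(\<Sum>b\<in>prime_power_pairs q. if fst a = fst b
        then ln (real (fst a)) * ln (real (fst b)) * (2 / real (fst a) ^ max (snd a) (snd b)) else 0)
      = (\<Sum>j\<in>{1..M (fst a)}. ln (real (fst a)) ^ 2 * (2 / real (fst a) ^ max (snd a) j))"
    if a: "a \<in> prime_power_pairs q" for a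
  proof -
    have fa: "fst a \<in> prime_factors q" using a unfolding prime_power_pairs_def by auto
    let ?F = "\<lambda>b. if fst a = fst b
        then ln (real (fst a)) * ln (real (fst b)) * (2 / real (fst a) ^ max (snd a) (snd b)) else 0"
    have "(\<Sum>b\<in>prime_power_pairs q. ?F b) = (\<Sum>p'\<in>prime_factors q. \<Sum>j\<in>{1..M p'}. ?F (p', j))"
      unfolding prime_power_pairs_def M_def by (subst sum.Sigma) (auto simp: case_prod_beta cong: if_cong)
    also have "\<dots> = (\<Sum>p'\<in>prime_factors q. if p' = fst a
          then (\<Sum>j\<in>{1..M (fst a)}. ln (real (fst a)) ^ 2 * (2 / real (fst a) ^ max (snd a) j)) else 0)"
      by (intro sum.cong refl) (auto simp: power2_eq_square)
    also have "\<dots> = (\<Sum>j\<in>{1..M (fst a)}. ln (real (fst a)) ^ 2 * (2 / real (fst a) ^ max (snd a) j))"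
      using fa by (subst sum.delta) auto
    finally show ?thesis .
  qed
  have "(\<Sum>a\<in>prime_power_pairs q. \<Sum>b\<in>prime_power_pairs q. if fst a = fst b
      then ln (real (fst a)) * ln (real (fst b)) * (2 / real (fst a) ^ max (snd a) (snd b)) else 0)
    = (\<Sum>a\<in>prime_power_pairs q. \<Sum>j\<in>{1..M (fst a)}. ln (real (fst a)) ^ 2 * (2 / real (fst a) ^ max (snd a) j))"
    using inner by (rule sum.cong[OF refl])
  also have "\<dots> = (\<Sum>p\<in>prime_factors q. \<Sum>i\<in>{1..M p}. \<Sum>j\<in>{1..M p}. ln (real p) ^ 2 * (2 / real p ^ max i j))"
    unfolding prime_power_pairs_def M_def by (subst sum.Sigma) (auto simp: case_prod_beta)
  also have "\<dots> \<le> (\<Sum>p\<in>prime_factors q. \<Sum>i\<in>{1..M p}. \<Sum>j\<in>{1..M p}.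
      ln (real p) ^ 2 * 2 * ((1 / real p) * ((3/4) ^ (i - 1) * (3/4) ^ (j - 1))))"
  proof (intro sum_mono)
    fix p i j assume p: "p \<in> prime_factors q" and i: "i \<in> {1..M p}" and j: "j \<in> {1..M p}"
    have "p \<ge> 2" using p by (auto simp: in_prime_factors_iff dest: prime_ge_2_nat)
    hence "1 / real p ^ max i j \<le> (1 / real p) * ((3/4) ^ (i - 1) * (3/4) ^ (j - 1))"
      using inverse_power_max_le i j by auto
    hence "ln (real p) ^ 2 * 2 * (1 / real p ^ max i j)
        \<le> ln (real p) ^ 2 * 2 * ((1 / real p) * ((3/4) ^ (i - 1) * (3/4) ^ (j - 1)))"
      by (intro mult_left_mono) auto
    thus "ln (real p) ^ 2 * (2 / real p ^ max i j)
        \<le> ln (real p) ^ 2 * 2 * ((1 / real p) * ((3/4) ^ (i - 1) * (3/4) ^ (j - 1)))"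
      by simp
  qed
  also have "\<dots> = (\<Sum>p\<in>prime_factors q. ln (real p) ^ 2 * 2 * (1 / real p) * (\<Sum>i\<in>{1..M p}. (3/4::real) ^ (i - 1))\<^sup>2)"
    by (simp add: power2_eq_square sum_product sum_distrib_left mult_ac)
  also have "\<dots> \<le> (\<Sum>p\<in>prime_factors q. ln (real p) ^ 2 * 2 * (1 / real p) * 16)"
  proof (intro sum_mono mult_left_mono)
    fix p
    have "(\<Sum>i\<in>{1..M p}. (3/4::real) ^ (i - 1)) = (4/3) * (\<Sum>i=1..M p. (3/4::real) ^ i)"
      by (simp add: sum_distrib_left) (intro sum.cong refl, auto simp: power_eq_if)
    also have "\<dots> \<le> (4/3) * ((3/4) / (1 - 3/4))" by (intro mult_left_mono geometric_sum_le) auto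
    finally have "(\<Sum>i\<in>{1..M p}. (3/4::real) ^ (i - 1)) \<le> 4" by simp
    moreover have "(\<Sum>i\<in>{1..M p}. (3/4::real) ^ (i - 1)) \<ge> 0" by (intro sum_nonneg) auto
    ultimately show "(\<Sum>i\<in>{1..M p}. (3/4::real) ^ (i - 1))\<^sup>2 \<le> 16"
      using power_mono[of _ 4 2] by fastforce
    show "0 \<le> ln (real p) ^ 2 * 2 * (1 / real p)" by simp
  qed
  also have "\<dots> = 32 * (\<Sum>p\<in>prime_factors q. ln (real p) ^ 2 / real p)" by (simp add: sum_distrib_left)
  finally show ?thesis .
qed

lemma joint_sum_le:
  "(\<Sum>a\<in>prime_power_pairs q. \<Sum>b\<in>prime_power_pairs q. ln (real (fst a)) * ln (real (fst b)) * joint_density a b)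
    \<le> 16 * (\<Sum>p\<in>prime_factors q. ln (real p) / real p)\<^sup>2 + 32 * (\<Sum>p\<in>prime_factors q. ln (real p) ^ 2 / real p)"
proof -
  let ?w = "\<lambda>a. ln (real (fst a))" and ?P = "prime_power_pairs q"
  let ?u = "\<lambda>a b. 4 / (real (fst a) ^ snd a * real (fst b) ^ snd b)"
  let ?d = "\<lambda>a b. if fst a = fst b then ?w a * ?w b * (2 / real (fst a) ^ max (snd a) (snd b)) else 0"
  have w_nonneg: "?w a \<ge> 0" and fst_pos: "real (fst a) > 0" if "a \<in> ?P" for a
    using prime_gt_0_nat[OF prime_power_pairsD(1)[OF that]] by (simp_all add: Suc_le_eq)
  have "(\<Sum>a\<in>?P. \<Sum>b\<in>?P. ?w a * ?w b * joint_density a b) \<le> (\<Sum>a\<in>?P. \<Sum>b\<in>?P. ?w a * ?w b * ?u a b + ?d a b)"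
  proof (intro sum_mono)
    fix a b assume a: "a \<in> ?P" and b: "b \<in> ?P"
    have "0 \<le> ?w a * ?w b" using w_nonneg[OF a] w_nonneg[OF b] by simp
    moreover have "?u a b \<ge> 0" using fst_pos[OF a] fst_pos[OF b] by simp
    moreover have "2 / real (fst a) ^ max (snd a) (snd b) \<ge> 0" using fst_pos[OF a] by simp
    ultimately show "?w a * ?w b * joint_density a b \<le> ?w a * ?w b * ?u a b + ?d a b"
      unfolding joint_density_def by (auto simp: mult_left_mono)
  qed
  also have "\<dots> = 4 * (\<Sum>a\<in>?P. ?w a / real (fst a) ^ snd a)\<^sup>2 + (\<Sum>a\<in>?P. \<Sum>b\<in>?P. ?d a b)"
    by (simp add: sum.distrib power2_eq_square sum_product sum_distrib_left mult_ac)
  also have "\<dots> \<le> 4 * (2 * (\<Sum>p\<in>prime_factors q. ln (real p) / real p))\<^sup>2 +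
      32 * (\<Sum>p\<in>prime_factors q. ln (real p) ^ 2 / real p)"
    using sum_prime_power_pairs_ln_le[of q] sum_same_prime_pairs_le[of q] w_nonneg fst_pos
    by (intro add_mono mult_left_mono power_mono sum_nonneg divide_nonneg_nonneg) auto
  finally show ?thesis by (simp add: power_mult_distrib)
qed

section \<open>Sums over prime factors\<close>

lemma prod_prime_factors_le:
  fixes n :: nat assumes "n > 0" shows "(\<Prod>p\<in>prime_factors n. p) \<le> n"
proof -
  have "(\<Prod>p\<in>prime_factors n. p) dvd (\<Prod>p\<in>prime_factors n. p ^ multiplicity p n)"
    by (intro prod_dvd_prod dvd_power) (auto simp: prime_factors_multiplicity)
  also have "\<dots> = n" using prime_factorization_nat[OF assms] by simp
  finally show ?thesis using assms by (intro dvd_imp_le) auto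
qed

lemma sum_ln_prime_factors_le: fixes n :: nat assumes "n > 0" shows "(\<Sum>p\<in>prime_factors n. ln (real p)) \<le> ln (real n)"
proof -
  have pos: "\<And>p. p \<in> prime_factors n \<Longrightarrow> real p > 0" by (auto simp: in_prime_factors_iff prime_gt_0_nat)
  have "(\<Sum>p\<in>prime_factors n. ln (real p)) = ln (\<Prod>p\<in>prime_factors n. real p)"
    using pos by (subst ln_prod) auto
  also have "(\<Prod>p\<in>prime_factors n. real p) = real (\<Prod>p\<in>prime_factors n. p)" by simp
  also have "ln \<dots> \<le> ln (real n)"
  proof -
    have le: "real (\<Prod>p\<in>prime_factors n. p) \<le> real n" using prod_prime_factors_le[OF assms] by (simp only: of_nat_le_iff)
    have "(\<Prod>p\<in>prime_factors n. p) > 0" by (intro prod_pos) (auto simp: in_prime_factors_iff prime_gt_0_nat)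
    hence "real (\<Prod>p\<in>prime_factors n. p) > 0" by (simp only: of_nat_0_less_iff)
    thus ?thesis using le by (simp only: ln_le_cancel_iff)
  qed
  finally show ?thesis .
qed

lemma card_multiples_ge:
  assumes "p > 0" shows "N div p \<le> card {k \<in> {1..N}. p dvd k}"
proof -
  have sub: "(\<lambda>j. p * j) ` {1..N div p} \<subseteq> {k \<in> {1..N}. p dvd k}"
  proof
    fix x assume "x \<in> (\<lambda>j. p * j) ` {1..N div p}"
    then obtain j where j: "j \<in> {1..N div p}" "x = p * j" by auto
    have "p * j \<le> p * (N div p)" using j by simp
    also have "\<dots> \<le> N" by simp
    finally show "x \<in> {k \<in> {1..N}. p dvd k}" using j assms by auto
  qed
  have "inj_on (\<lambda>j. p * j) {1..N div p}" using assms by (intro inj_onI) auto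
  hence "card {1..N div p} = card ((\<lambda>j. p * j) ` {1..N div p})" by (rule card_image[symmetric])
  also have "\<dots> \<le> card {k \<in> {1..N}. p dvd k}" by (rule card_mono[OF _ sub]) simp
  finally show ?thesis by simp
qed

text \<open>Each \<open>k \<le> N\<close> has \<open>\<Sum>\<^bsub>p|k\<^esub> ln p \<le> ln N\<close>, while a prime \<open>p \<le> N\<close> divides \<open>\<lfloor>N / p\<rfloor>\<close> of these \<open>k\<close>.\<close>
lemma sum_ln_div_primes_le:
  assumes N: "N \<ge> 1"
  shows "(\<Sum>p\<in>{p. prime p \<and> p \<le> N}. ln (real p) / real p) \<le> 2 * ln (real N)"
proof -
  define Pr where "Pr = {p. prime p \<and> p \<le> N}"
  define cnt where "cnt p = card {k \<in> {1..N}. p dvd k}" for p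
  have finPr: "finite Pr" unfolding Pr_def by (rule finite_subset[of _ "{..N}"]) auto
  have lnp: "0 \<le> ln (real p)" "ln (real p) \<le> ln (real N)" if "p \<in> Pr" for p
    using that unfolding Pr_def by (auto dest: prime_gt_0_nat simp: Suc_le_eq)
  have "(\<Sum>p\<in>Pr. ln (real p) * real (cnt p)) = (\<Sum>p\<in>Pr. \<Sum>k\<in>{1..N}. if p dvd k then ln (real p) else 0)"
    unfolding cnt_def by (intro sum.cong refl) (simp add: sum.inter_filter[symmetric])
  also have "\<dots> = (\<Sum>k\<in>{1..N}. \<Sum>p\<in>Pr. if p dvd k then ln (real p) else 0)" by (rule sum.swap)
  also have "\<dots> \<le> (\<Sum>k\<in>{1..N}. ln (real N))"
  proof (intro sum_mono)
    fix k assume k: "k \<in> {1..N}"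
    have "x \<le> N" if "x dvd k" for x using dvd_imp_le[OF that] k by auto
    hence "{p \<in> Pr. p dvd k} = prime_factors k"
      using k unfolding Pr_def by (auto simp: in_prime_factors_iff)
    hence "(\<Sum>p\<in>Pr. if p dvd k then ln (real p) else 0) = (\<Sum>p\<in>prime_factors k. ln (real p))"
      using finPr by (simp add: sum.inter_filter[symmetric])
    also have "\<dots> \<le> ln (real k)" using k by (intro sum_ln_prime_factors_le) auto
    also have "\<dots> \<le> ln (real N)" using k by auto
    finally show "(\<Sum>p\<in>Pr. if p dvd k then ln (real p) else 0) \<le> ln (real N)" .
  qed
  finally have multiples: "(\<Sum>p\<in>Pr. ln (real p) * real (cnt p)) \<le> real N * ln (real N)" by simp
  have "card Pr \<le> N"
  proof -
    have "Pr \<subseteq> {1..N}" unfolding Pr_def by (auto dest: prime_gt_0_nat simp: Suc_le_eq)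
    hence "card Pr \<le> card {1..N}" by (intro card_mono) auto
    thus ?thesis by simp
  qed
  have "(\<Sum>p\<in>Pr. ln (real p)) \<le> (\<Sum>p\<in>Pr. ln (real N))" using lnp by (intro sum_mono) auto
  also have "\<dots> = real (card Pr) * ln (real N)" by simp
  also have "\<dots> \<le> real N * ln (real N)" using \<open>card Pr \<le> N\<close> N by (intro mult_right_mono) auto
  finally have primes: "(\<Sum>p\<in>Pr. ln (real p)) \<le> real N * ln (real N)" .
  have cnt_ge: "real N / real p - 1 \<le> real (cnt p)" if "p \<in> Pr" for p
  proof -
    have p0: "p > 0" using that unfolding Pr_def by (auto simp: prime_gt_0_nat)
    have "real N = real p * real (N div p) + real (N mod p)"
      by (metis mult_div_mod_eq of_nat_add of_nat_mult)
    moreover have "real (N mod p) < real p" using p0 by simp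
    ultimately have "real N / real p < real (N div p) + 1" using p0 by (simp add: field_simps)
    thus ?thesis using card_multiples_ge[OF p0, of N] unfolding cnt_def by linarith
  qed
  have "real N * (\<Sum>p\<in>Pr. ln (real p) / real p)
      = (\<Sum>p\<in>Pr. ln (real p) * (real N / real p - 1)) + (\<Sum>p\<in>Pr. ln (real p))"
    by (simp add: sum_distrib_left sum.distrib[symmetric] algebra_simps)
  also have "\<dots> \<le> (\<Sum>p\<in>Pr. ln (real p) * real (cnt p)) + (\<Sum>p\<in>Pr. ln (real p))"
    using cnt_ge lnp by (intro add_right_mono sum_mono mult_left_mono) auto
  also have "\<dots> \<le> real N * (2 * ln (real N))" using multiples primes by linarith
  finally show ?thesis unfolding Pr_def using N by (simp add: mult_le_cancel_left)
qed

lemma sum_ln_div_small_prime_factors_le: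
  fixes y :: real assumes y: "y \<ge> 1"
  shows "(\<Sum>p\<in>{p \<in> prime_factors q. real p \<le> y}. ln (real p) / real p) \<le> 2 * ln y"
proof -
  define N where "N = nat \<lfloor>y\<rfloor>"
  have N: "N \<ge> 1" "real N \<le> y" using y unfolding N_def by linarith+
  have "(\<Sum>p\<in>{p \<in> prime_factors q. real p \<le> y}. ln (real p) / real p)
      \<le> (\<Sum>p\<in>{p. prime p \<and> p \<le> N}. ln (real p) / real p)"
  proof (rule sum_mono2)
    show "finite {p. prime p \<and> p \<le> N}" by (rule finite_subset[of _ "{..N}"]) auto
    show "{p \<in> prime_factors q. real p \<le> y} \<subseteq> {p. prime p \<and> p \<le> N}"
      unfolding N_def by (auto simp: in_prime_factors_iff le_nat_floor)
  qed (auto dest: prime_gt_0_nat simp: Suc_le_eq)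
  also have "\<dots> \<le> 2 * ln (real N)" by (rule sum_ln_div_primes_le[OF N(1)])
  also have "\<dots> \<le> 2 * ln y" using N by simp
  finally show ?thesis .
qed

lemma sum_ln_large_prime_factors_le:
  assumes "q > 0" shows "(\<Sum>p\<in>{p \<in> prime_factors q. y < real p}. ln (real p)) \<le> ln (real q)"
proof -
  have "(\<Sum>p\<in>{p \<in> prime_factors q. y < real p}. ln (real p)) \<le> (\<Sum>p\<in>prime_factors q. ln (real p))"
    by (intro sum_mono2) (auto simp: in_prime_factors_iff dest: prime_gt_0_nat)
  also have "\<dots> \<le> ln (real q)" by (rule sum_ln_prime_factors_le[OF assms])
  finally show ?thesis .
qed

lemma sum_split_prime_factors:
  "(\<Sum>p\<in>prime_factors q. f p) =
    (\<Sum>p\<in>{p \<in> prime_factors q. real p \<le> y}. f p) + (\<Sum>p\<in>{p \<in> prime_factors q. y < real p}. f p)"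
  by (subst sum.union_disjoint[symmetric]) (auto intro: sum.cong)

lemma sum_ln_div_prime_factors_le:
  fixes y :: real assumes q: "q > 0" and y: "y \<ge> 1" "ln (real q) \<le> y"
  shows "(\<Sum>p\<in>prime_factors q. ln (real p) / real p) \<le> 2 * ln y + 1"
proof -
  let ?L = "{p \<in> prime_factors q. y < real p}"
  have "(\<Sum>p\<in>?L. ln (real p) / real p) \<le> (\<Sum>p\<in>?L. ln (real p) / y)"
    using y by (intro sum_mono divide_left_mono) (auto simp: in_prime_factors_iff dest: prime_gt_0_nat)
  also have "\<dots> = (\<Sum>p\<in>?L. ln (real p)) / y" by (simp add: sum_divide_distrib)
  also have "\<dots> \<le> 1" using sum_ln_large_prime_factors_le[OF q, of y] y by (simp add: divide_le_eq_1)
  finally show ?thesis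
    using sum_split_prime_factors[of "\<lambda>p. ln (real p) / real p" q y]
      sum_ln_div_small_prime_factors_le[OF y(1), of q] by linarith
qed

lemma sum_ln_sq_div_prime_factors_le:
  fixes y :: real assumes q: "q > 0" and y: "exp 1 \<le> y" "ln (real q) \<le> y"
  shows "(\<Sum>p\<in>prime_factors q. ln (real p) ^ 2 / real p) \<le> 2 * (ln y)\<^sup>2 + ln y"
proof -
  let ?S = "{p \<in> prime_factors q. real p \<le> y}" and ?L = "{p \<in> prime_factors q. y < real p}"
  have y1: "y \<ge> 1" using y(1) exp_ge_add_one_self[of 1] by linarith
  have ln_nonneg: "ln (real p) \<ge> 0" if "p \<in> prime_factors q" for p
    using that by (auto simp: in_prime_factors_iff dest: prime_gt_0_nat)
  have "(\<Sum>p\<in>?S. ln (real p) ^ 2 / real p) \<le> (\<Sum>p\<in>?S. ln y * (ln (real p) / real p))"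
  proof (intro sum_mono)
    fix p assume p: "p \<in> ?S"
    hence "real p > 0" "real p \<le> y" by (auto simp: in_prime_factors_iff prime_gt_0_nat)
    hence "ln (real p) \<le> ln y" "real p > 0" by simp_all
    thus "ln (real p) ^ 2 / real p \<le> ln y * (ln (real p) / real p)"
      using ln_nonneg p by (simp add: power2_eq_square divide_right_mono mult_right_mono)
  qed
  also have "\<dots> = ln y * (\<Sum>p\<in>?S. ln (real p) / real p)" by (simp add: sum_distrib_left)
  also have "\<dots> \<le> ln y * (2 * ln y)"
    using sum_ln_div_small_prime_factors_le[OF y1] y1 by (intro mult_left_mono) auto
  finally have small: "(\<Sum>p\<in>?S. ln (real p) ^ 2 / real p) \<le> 2 * (ln y)\<^sup>2" by (simp add: power2_eq_square)
  have "(\<Sum>p\<in>?L. ln (real p) ^ 2 / real p) \<le> (\<Sum>p\<in>?L. ln (real p) * (ln y / y))"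
  proof (intro sum_mono)
    fix p assume p: "p \<in> ?L"
    hence "ln (real p) / real p \<le> ln y / y" using ln_x_over_x_mono[OF y(1)] by simp
    hence "ln (real p) * (ln (real p) / real p) \<le> ln (real p) * (ln y / y)"
      using ln_nonneg p by (intro mult_left_mono) auto
    thus "ln (real p) ^ 2 / real p \<le> ln (real p) * (ln y / y)" by (simp add: power2_eq_square)
  qed
  also have "\<dots> = (\<Sum>p\<in>?L. ln (real p)) * (ln y / y)" by (rule sum_distrib_right[symmetric])
  also have "\<dots> \<le> y * (ln y / y)"
    using sum_ln_large_prime_factors_le[OF q, of y] y y1 by (intro mult_right_mono) auto
  also have "\<dots> = ln y" using y1 by simp
  finally show ?thesis
    using sum_split_prime_factors[of "\<lambda>p. ln (real p) ^ 2 / real p" q y] small by linarith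
qed

lemma ln_ge_1_minus_inverse: fixes x :: real assumes "x > 0" shows "ln x \<ge> 1 - 1 / x"
proof -
  have "ln (inverse x) \<le> inverse x - 1" using assms by (intro ln_le_minus_one) simp
  thus ?thesis by (simp add: ln_inverse divide_inverse)
qed

lemma ln_ln_ge:
  assumes q: "q \<ge> 3" shows "ln (ln (real q)) \<ge> 1 / 12"
proof -
  have "ln (272 / 100 :: real) > 1" by (rule ln_272_gt_1)
  moreover have "ln (300 / 272 :: real) \<ge> 1 - 272 / 300" using ln_ge_1_minus_inverse[of "300 / 272"] by simp
  moreover have "ln (3 :: real) = ln (272 / 100) + ln (300 / 272)" by (subst ln_mult_pos[symmetric]) auto
  ultimately have "ln (3 :: real) \<ge> 328 / 300" by simp
  moreover have "ln (real q) \<ge> ln 3" using q by simp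
  ultimately have lq: "ln (real q) \<ge> 328 / 300" by linarith
  have "ln (ln (real q)) \<ge> 1 - 1 / ln (real q)" using lq by (intro ln_ge_1_minus_inverse) simp
  moreover have "1 / ln (real q) \<le> 300 / 328" using lq by (simp add: field_simps)
  ultimately show ?thesis by simp
qed

lemma ln_max_8_ln_le:
  assumes q: "q \<ge> 3" shows "ln (max 8 (ln (real q))) \<le> 36 * ln (ln (real q))"
proof (cases "ln (real q) \<le> 8")
  case True
  have "ln (8 :: real) = 3 * ln 2" using ln_realpow[of 2 3] by simp
  hence "ln (8 :: real) \<le> 3" using ln_2_less_1 by simp
  thus ?thesis using True ln_ln_ge[OF q] by (simp add: max_def)
next
  case False
  thus ?thesis using ln_ln_ge[OF q] by (simp add: max_def)
qed

lemma prime_factor_sums_le_ln_ln: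
  assumes q: "q \<ge> 3"
  shows "16 * (\<Sum>p\<in>prime_factors q. ln (real p) / real p)\<^sup>2 + 32 * (\<Sum>p\<in>prime_factors q. ln (real p) ^ 2 / real p)
    \<le> 311040 * (ln (ln (real q)))\<^sup>2"
proof -
  define y where "y = max 8 (ln (real q))"
  define S1 where "S1 = (\<Sum>p\<in>prime_factors q. ln (real p) / real p)"
  define S2 where "S2 = (\<Sum>p\<in>prime_factors q. ln (real p) ^ 2 / real p)"
  have y: "exp 1 \<le> y" "ln (real q) \<le> y" using e_less_272 unfolding y_def by linarith+
  have "ln (exp 1) \<le> ln y" using y(1) by (subst ln_le_cancel_iff) (auto simp: y_def)
  hence lny: "1 \<le> ln y" by simp
  have "S1 \<le> 2 * ln y + 1" unfolding S1_def
    using q y unfolding y_def by (intro sum_ln_div_prime_factors_le) auto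
  moreover have "S1 \<ge> 0" unfolding S1_def
    by (intro sum_nonneg) (auto simp: in_prime_factors_iff dest: prime_gt_0_nat)
  ultimately have "S1\<^sup>2 \<le> (3 * ln y)\<^sup>2" using lny by (intro power_mono) auto
  moreover have "S2 \<le> 3 * (ln y)\<^sup>2"
  proof -
    have "ln y \<le> (ln y)\<^sup>2" using lny by (simp add: power2_eq_square)
    thus ?thesis using sum_ln_sq_div_prime_factors_le[of q y] q y unfolding S2_def by simp
  qed
  moreover have "(ln y)\<^sup>2 \<le> (36 * ln (ln (real q)))\<^sup>2"
    using ln_max_8_ln_le[OF q] lny unfolding y_def by (intro power_mono) auto
  ultimately have "16 * S1\<^sup>2 + 32 * S2 \<le> 311040 * (ln (ln (real q)))\<^sup>2" by (simp add: power_mult_distrib)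
  thus ?thesis unfolding S1_def S2_def .
qed

lemma sum_ln_index_sq_le:
  assumes q: "q \<ge> 3"
  shows "(\<Sum>c\<in>dirichlet_chars q. (ln (real (q div conductor q c)))\<^sup>2)
    \<le> real (totient q) * (311040 * (ln (ln (real q)))\<^sup>2)"
proof -
  have q2: "q \<ge> 2" using q by simp
  have "(\<Sum>c\<in>dirichlet_chars q. (ln (real (q div conductor q c)))\<^sup>2) \<le> real (totient q) *
      (\<Sum>a\<in>prime_power_pairs q. \<Sum>b\<in>prime_power_pairs q. ln (real (fst a)) * ln (real (fst b)) * joint_density a b)"
    by (rule sum_ln_index_sq_le_joint[OF q2])
  also have "\<dots> \<le> real (totient q) * (16 * (\<Sum>p\<in>prime_factors q. ln (real p) / real p)\<^sup>2 +
      32 * (\<Sum>p\<in>prime_factors q. ln (real p) ^ 2 / real p))"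
    by (intro mult_left_mono joint_sum_le) auto
  also have "\<dots> \<le> real (totient q) * (311040 * (ln (ln (real q)))\<^sup>2)"
    by (intro mult_left_mono prime_factor_sums_le_ln_ln[OF q]) auto
  finally show ?thesis .
qed

section \<open>The exceptional characters\<close>

lemma card_gt_mult_sq_le_sum_sq:
  fixes f :: "'a \<Rightarrow> real"
  assumes "finite X" "T > 0"
  shows "real (card {x \<in> X. T < f x}) * T\<^sup>2 \<le> (\<Sum>x\<in>X. (f x)\<^sup>2)"
proof -
  have "real (card {x \<in> X. T < f x}) * T\<^sup>2 = (\<Sum>x\<in>{x \<in> X. T < f x}. T\<^sup>2)" by simp
  also have "\<dots> \<le> (\<Sum>x\<in>{x \<in> X. T < f x}. (f x)\<^sup>2)"
    using assms(2) by (intro sum_mono power_mono) auto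
  also have "\<dots> \<le> (\<Sum>x\<in>X. (f x)\<^sup>2)" using assms(1) by (intro sum_mono2) auto
  finally show ?thesis .
qed

lemma card_chars_large_index_le:
  assumes q: "q \<ge> 3" and w: "w > 0"
  shows "real (card {c \<in> dirichlet_chars q. 70 * ln (ln (real q)) / w < ln (real (q div conductor q c))})
    \<le> real (totient q) * (70 * w\<^sup>2)"
proof -
  define L where "L = ln (ln (real q))"
  define T where "T = 70 * L / w"
  have L: "L > 0" using ln_ln_ge[OF q] unfolding L_def by linarith
  hence T: "T > 0" unfolding T_def using w by simp
  have "real (card {c \<in> dirichlet_chars q. T < ln (real (q div conductor q c))}) * T\<^sup>2
      \<le> (\<Sum>c\<in>dirichlet_chars q. (ln (real (q div conductor q c)))\<^sup>2)"
    using q by (intro card_gt_mult_sq_le_sum_sq[OF finite_dirichlet_chars T]) simp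
  also have "\<dots> \<le> real (totient q) * (311040 * L\<^sup>2)"
    unfolding L_def by (rule sum_ln_index_sq_le[OF q])
  also have "\<dots> = real (totient q) * (311040 / 4900 * w\<^sup>2) * T\<^sup>2"
    using w unfolding T_def by (simp add: field_simps power2_eq_square)
  finally have "real (card {c \<in> dirichlet_chars q. T < ln (real (q div conductor q c))})
      \<le> real (totient q) * (311040 / 4900 * w\<^sup>2)"
    using T by simp
  also have "\<dots> \<le> real (totient q) * (70 * w\<^sup>2)" by (intro mult_left_mono) auto
  finally show ?thesis unfolding T_def L_def .
qed

theorem lemma3p2:
  shows "\<exists>C>0. \<forall>w :: nat \<Rightarrow> real.
           (\<forall>q. w q > 0) \<longrightarrow> (w \<longlonglongrightarrow> 0) \<longrightarrow>
           (\<forall>q\<ge>3. \<exists>F \<subseteq> dirichlet_chars q.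
              (\<forall>c. c \<in> F \<longleftrightarrow> (\<lambda>n. cnj (c n)) \<in> F) \<and>
              real (card F) \<ge> real (totient q) * (1 - C * (w q)\<^sup>2) \<and>
              (\<forall>c\<in>F. \<bar>ln (real (conductor q c)) - ln (real q)\<bar>
                        \<le> C * ln (ln (real q)) / w q))"
proof (intro exI[of _ "70 :: real"] conjI allI impI)
  fix w :: "nat \<Rightarrow> real" and q :: nat
  assume w: "\<forall>q. w q > 0" and q: "q \<ge> 3"
  let ?T = "70 * ln (ln (real q)) / w q"
  define Bad where "Bad = {c \<in> dirichlet_chars q. ?T < ln (real (q div conductor q c))}"
  define F where "F = dirichlet_chars q - Bad"
  have q2: "q \<ge> 2" using q by simp
  show "\<exists>F \<subseteq> dirichlet_chars q. (\<forall>c. c \<in> F \<longleftrightarrow> (\<lambda>n. cnj (c n)) \<in> F) \<and>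
      real (card F) \<ge> real (totient q) * (1 - 70 * (w q)\<^sup>2) \<and>
      (\<forall>c\<in>F. \<bar>ln (real (conductor q c)) - ln (real q)\<bar> \<le> 70 * ln (ln (real q)) / w q)"
  proof (intro exI[of _ F] conjI allI ballI)
    show "F \<subseteq> dirichlet_chars q" unfolding F_def by blast
    show "c \<in> F \<longleftrightarrow> (\<lambda>n. cnj (c n)) \<in> F" for c
      unfolding F_def Bad_def by (simp add: cnj_in_dirichlet_chars_iff conductor_cnj)
    show "\<bar>ln (real (conductor q c)) - ln (real q)\<bar> \<le> ?T" if "c \<in> F" for c
      using that abs_ln_conductor_diff[OF q2] unfolding F_def Bad_def by auto
    have "card Bad \<le> totient q"
      using card_mono[OF finite_dirichlet_chars[OF q2]] card_dirichlet_chars[OF q2] unfolding Bad_def by fastforce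
    hence "real (card F) = real (totient q) - real (card Bad)"
      using finite_dirichlet_chars[OF q2] card_dirichlet_chars[OF q2] unfolding F_def Bad_def
      by (subst card_Diff_subset) (auto simp: of_nat_diff)
    thus "real (totient q) * (1 - 70 * (w q)\<^sup>2) \<le> real (card F)"
      using card_chars_large_index_le[OF q, of "w q"] w unfolding Bad_def by (simp add: algebra_simps)
  qed
qed simp

end
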